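(* Let $G$ be a connected reflexive graph and let $a,b$ be vertices of $G$ at distance at least $4$ in $G$. Let $G+E$ be the graph obtained from $G$ by adding the edge $E=ab$. Then $H_1(\mathbf{G}+\mathbf{E})\cong H_1(\mathbf{G})\oplus\mathbb{Z}$. More precisely, the map induced by inclusion embeds $H_1(\mathbf{G})$ into $H_1(\mathbf{G}+\mathbf{E})$, and for any closed walk $C$ in $G+E$ that traverses the edge $E$ exactly once, $H_1(\mathbf{G}+\mathbf{E})$ is the direct sum of the image of $H_1(\mathbf{G})$ and the infinite cyclic subgroup generated by $[C]$; in particular, a basis of $H_1(\mathbf{G})$ (when free) together with $[C]$ is a basis of $H_1(\mathbf{G}+\mathbf{E})$.
   Context: A graph is reflexive if every vertex has a loop. For a reflexive graph $G$, its clique complex $\mathbf{G}$ has as $n$-simplices the ordered $(n+1)$-tuples of vertices that are pairwise adjacent or equal; $C_n(\mathbf{G})$ is the free abelian group on the $n$-simplices with boundary $\delta_n[v_0,\dots,v_n]=\sum_i(-1)^i[v_0,\dots,\hat v_i,\dots,v_n]$, and $H_1(\mathbf{G})=\ker\delta_1/\operatorname{im}\delta_2$. A closed walk $(x_0,\dots,x_\ell,x_0)$ is identified with the $1$-cycle $\sum[x_i,x_{i+1}]$ and $[C]$ denotes its homology class. *)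

theory Defs
  imports "HOL-Library.Poly_Mapping"
begin

definition is_graph :: "'a set \<Rightarrow> ('a \<Rightarrow> 'a \<Rightarrow> bool) \<Rightarrow> bool" where
  "is_graph V adj \<longleftrightarrow> (\<forall>x y. adj x y \<longrightarrow> x \<in> V \<and> y \<in> V \<and> adj y x)"

definition reflexive_graph :: "'a set \<Rightarrow> ('a \<Rightarrow> 'a \<Rightarrow> bool) \<Rightarrow> bool" where
  "reflexive_graph V adj \<longleftrightarrow> is_graph V adj \<and> (\<forall>v\<in>V. adj v v)"

definition is_walk :: "'a set \<Rightarrow> ('a \<Rightarrow> 'a \<Rightarrow> bool) \<Rightarrow> 'a list \<Rightarrow> bool" where
  "is_walk V adj xs \<longleftrightarrow> xs \<noteq> [] \<and> set xs \<subseteq> V \<and>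
     (\<forall>i. Suc i < length xs \<longrightarrow> adj (xs ! i) (xs ! Suc i))"

definition graph_connected :: "'a set \<Rightarrow> ('a \<Rightarrow> 'a \<Rightarrow> bool) \<Rightarrow> bool" where
  "graph_connected V adj \<longleftrightarrow>
     (\<forall>x\<in>V. \<forall>y\<in>V. \<exists>xs. is_walk V adj xs \<and> hd xs = x \<and> last xs = y)"

definition graph_dist :: "'a set \<Rightarrow> ('a \<Rightarrow> 'a \<Rightarrow> bool) \<Rightarrow> 'a \<Rightarrow> 'a \<Rightarrow> nat" where
  "graph_dist V adj x y =
     (LEAST k. \<exists>xs. is_walk V adj xs \<and> hd xs = x \<and> last xs = y \<and> length xs = Suc k)"

definition add_edge :: "('a \<Rightarrow> 'a \<Rightarrow> bool) \<Rightarrow> 'a \<Rightarrow> 'a \<Rightarrow> 'a \<Rightarrow> 'a \<Rightarrow> bool" where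
  "add_edge adj a b x y \<longleftrightarrow> adj x y \<or> (x = a \<and> y = b) \<or> (x = b \<and> y = a)"

definition clique_simplex :: "'a set \<Rightarrow> ('a \<Rightarrow> 'a \<Rightarrow> bool) \<Rightarrow> nat \<Rightarrow> 'a list \<Rightarrow> bool" where
  "clique_simplex V adj n \<sigma> \<longleftrightarrow> length \<sigma> = Suc n \<and> set \<sigma> \<subseteq> V \<and>
     (\<forall>x\<in>set \<sigma>. \<forall>y\<in>set \<sigma>. x = y \<or> adj x y)"

definition clique_chain :: "'a set \<Rightarrow> ('a \<Rightarrow> 'a \<Rightarrow> bool) \<Rightarrow> nat \<Rightarrow> ('a list \<Rightarrow>\<^sub>0 int) \<Rightarrow> bool" where
  "clique_chain V adj n c \<longleftrightarrow> (\<forall>\<sigma>\<in>Poly_Mapping.keys c. clique_simplex V adj n \<sigma>)"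

definition del_nth :: "nat \<Rightarrow> 'a list \<Rightarrow> 'a list" where
  "del_nth i xs = take i xs @ drop (Suc i) xs"

definition simplex_boundary :: "('a list \<Rightarrow>\<^sub>0 int) \<Rightarrow> ('a list \<Rightarrow>\<^sub>0 int)" where
  "simplex_boundary = frag_extend
     (\<lambda>\<sigma>. \<Sum>i<length \<sigma>. frag_cmul ((-1) ^ i) (frag_of (del_nth i \<sigma>)))"

definition cycles1 :: "'a set \<Rightarrow> ('a \<Rightarrow> 'a \<Rightarrow> bool) \<Rightarrow> ('a list \<Rightarrow>\<^sub>0 int) set" where
  "cycles1 V adj = {c. clique_chain V adj 1 c \<and> simplex_boundary c = 0}"

definition boundaries1 :: "'a set \<Rightarrow> ('a \<Rightarrow> 'a \<Rightarrow> bool) \<Rightarrow> ('a list \<Rightarrow>\<^sub>0 int) set" where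
  "boundaries1 V adj = {simplex_boundary d | d. clique_chain V adj 2 d}"

text \<open>Closed walk (x_0,...,x_l,x_0) given by the list [x_0,...,x_l].\<close>
definition closed_walk :: "'a set \<Rightarrow> ('a \<Rightarrow> 'a \<Rightarrow> bool) \<Rightarrow> 'a list \<Rightarrow> bool" where
  "closed_walk V adj xs \<longleftrightarrow> is_walk V adj xs \<and> adj (last xs) (hd xs)"

definition walk_chain :: "'a list \<Rightarrow> ('a list \<Rightarrow>\<^sub>0 int)" where
  "walk_chain xs = (\<Sum>i<length xs. frag_of [xs ! i, xs ! (Suc i mod length xs)])"

definition edge_traversals :: "'a list \<Rightarrow> 'a \<Rightarrow> 'a \<Rightarrow> nat" where
  "edge_traversals xs a b =
     card {i. i < length xs \<and> {xs ! i, xs ! (Suc i mod length xs)} = {a, b}}"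

end

theory Submission
  imports Defs
begin

(* Since a and b have no common neighbour, a clique of G+E containing both a and b consists of
   a and b only.  Hence the flux c[a,b] - c[b,a] of a 1-chain through E vanishes on boundaries of
   G+E and on chains of G, and is 1 or -1 on a closed walk C traversing E once; this forces k = 0
   whenever z' + k C bounds.  A 2-chain of G+E splits into a 2-chain of G and a part on {a,b},
   whose boundary, if it is a chain of G, only involves the loops [a,a] and [b,b], which bound in
   G.  Finally, subtracting multiples of C and of the boundary of the triangle [a,b,a] from a
   cycle of G+E removes E from it. *)

lemma graph_dist_le_walk:
  assumes "is_walk V adj xs" "hd xs = x" "last xs = y"
  shows "graph_dist V adj x y \<le> length xs - 1"
proof -
  have "\<exists>ys. is_walk V adj ys \<and> hd ys = x \<and> last ys = y \<and> length ys = Suc (length xs - 1)"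
    using assms by (intro exI[of _ xs]) (auto simp: is_walk_def)
  then show ?thesis unfolding graph_dist_def by (rule Least_le)
qed

lemma graph_dist_ge_3D:
  assumes "is_graph V adj" "a \<in> V" "b \<in> V" "3 \<le> graph_dist V adj a b"
  shows "a \<noteq> b" "\<not> adj a b" "\<not> (adj a c \<and> adj c b)"
proof -
  show "a \<noteq> b"
    using assms graph_dist_le_walk[of V adj "[a]" a b] by (auto simp: is_walk_def)
  show "\<not> adj a b"
    using assms graph_dist_le_walk[of V adj "[a, b]" a b] by (auto simp: is_walk_def less_Suc_eq)
  show "\<not> (adj a c \<and> adj c b)"
  proof
    assume "adj a c \<and> adj c b"
    moreover from this have "c \<in> V" using assms(1) by (auto simp: is_graph_def)
    ultimately show False
      using assms graph_dist_le_walk[of V adj "[a, c, b]" a b]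
      by (auto simp: is_walk_def less_Suc_eq)
  qed
qed

lemma is_graph_add_edge:
  "is_graph V adj \<Longrightarrow> a \<in> V \<Longrightarrow> b \<in> V \<Longrightarrow> is_graph V (add_edge adj a b)"
  by (auto simp: is_graph_def add_edge_def)

lemma simplex_boundary_add: "simplex_boundary (c + d) = simplex_boundary c + simplex_boundary d"
  by (simp add: simplex_boundary_def frag_extend_add)

lemma simplex_boundary_diff: "simplex_boundary (c - d) = simplex_boundary c - simplex_boundary d"
  by (simp add: simplex_boundary_def frag_extend_diff)

lemma simplex_boundary_cmul: "simplex_boundary (frag_cmul k c) = frag_cmul k (simplex_boundary c)"
  by (simp add: simplex_boundary_def frag_extend_cmul)

lemma simplex_boundary_sum:
  "finite I \<Longrightarrow> simplex_boundary (sum f I) = (\<Sum>i\<in>I. simplex_boundary (f i))"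
  by (simp add: simplex_boundary_def frag_extend_sum o_def)

lemma simplex_boundary_edge: "simplex_boundary (frag_of [x, y]) = frag_of [y] - frag_of [x]"
  by (simp add: simplex_boundary_def lessThan_Suc del_nth_def numeral_2_eq_2)

lemma simplex_boundary_triangle:
  "simplex_boundary (frag_of [x, y, z]) = frag_of [y, z] - frag_of [x, z] + frag_of [x, y]"
  by (simp add: simplex_boundary_def lessThan_Suc del_nth_def numeral_3_eq_3 numeral_2_eq_2)

lemma keys_simplex_boundary:
  "Poly_Mapping.keys (simplex_boundary c) \<subseteq>
     {del_nth i \<sigma> | \<sigma> i. \<sigma> \<in> Poly_Mapping.keys c \<and> i < length \<sigma>}"
proof -
  have "Poly_Mapping.keys (\<Sum>i<length \<sigma>. frag_cmul ((-1) ^ i) (frag_of (del_nth i \<sigma>)))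
          \<subseteq> {del_nth i \<sigma> | i. i < length \<sigma>}" for \<sigma> :: "'a list"
    using keys_sum[of "\<lambda>i. frag_cmul ((-1) ^ i) (frag_of (del_nth i \<sigma>))" "{..<length \<sigma>}"]
    by (auto simp: subset_iff)
  then show ?thesis
    unfolding simplex_boundary_def using keys_frag_extend[of _ c]
    by (smt (verit) UN_iff mem_Collect_eq subset_iff)
qed

lemma set_del_nth: "set (del_nth i xs) \<subseteq> set xs"
  unfolding del_nth_def using set_take_subset set_drop_subset by fastforce

lemma clique_simplex_del_nth:
  "clique_simplex V adj (Suc n) \<sigma> \<Longrightarrow> i < length \<sigma> \<Longrightarrow> clique_simplex V adj n (del_nth i \<sigma>)"
proof -
  assume "clique_simplex V adj (Suc n) \<sigma>" "i < length \<sigma>"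
  moreover from this have "length (del_nth i \<sigma>) = length \<sigma> - 1"
    by (simp add: del_nth_def)
  ultimately show ?thesis
    using set_del_nth[of i \<sigma>] unfolding clique_simplex_def by auto
qed

lemma clique_chain_iff_keys:
  "clique_chain V adj n c \<longleftrightarrow> Poly_Mapping.keys c \<subseteq> {\<sigma>. clique_simplex V adj n \<sigma>}"
  by (auto simp: clique_chain_def)

lemma clique_chain_simplex_boundary:
  "clique_chain V adj (Suc n) c \<Longrightarrow> clique_chain V adj n (simplex_boundary c)"
  unfolding clique_chain_def using keys_simplex_boundary[of c] clique_simplex_del_nth by blast

lemma clique_chain_add:
  "clique_chain V adj n c \<Longrightarrow> clique_chain V adj n d \<Longrightarrow> clique_chain V adj n (c + d)"
  unfolding clique_chain_iff_keys using keys_add[of c d] by blast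

lemma clique_chain_diff:
  "clique_chain V adj n c \<Longrightarrow> clique_chain V adj n d \<Longrightarrow> clique_chain V adj n (c - d)"
  unfolding clique_chain_iff_keys using keys_diff[of c d] by blast

lemma clique_chain_cmul: "clique_chain V adj n c \<Longrightarrow> clique_chain V adj n (frag_cmul k c)"
  unfolding clique_chain_def by simp

lemma clique_chain_frag_of: "clique_simplex V adj n \<sigma> \<Longrightarrow> clique_chain V adj n (frag_of \<sigma>)"
  unfolding clique_chain_def by simp

lemma clique_chain_sum:
  "(\<And>i. i \<in> I \<Longrightarrow> clique_chain V adj n (f i)) \<Longrightarrow> clique_chain V adj n (sum f I)"
  unfolding clique_chain_iff_keys using keys_sum[of f I] by blast

lemma boundaries1_add:
  assumes "c \<in> boundaries1 V adj" "c' \<in> boundaries1 V adj"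
  shows "c + c' \<in> boundaries1 V adj"
proof -
  obtain d d' where "clique_chain V adj 2 d" "clique_chain V adj 2 d'"
    and "c = simplex_boundary d" "c' = simplex_boundary d'"
    using assms unfolding boundaries1_def by blast
  then have "c + c' = simplex_boundary (d + d')" "clique_chain V adj 2 (d + d')"
    by (simp_all add: simplex_boundary_add clique_chain_add)
  then show ?thesis
    unfolding boundaries1_def by blast
qed

lemma loop_chain_in_boundaries1:
  assumes "Poly_Mapping.keys e \<subseteq> {[v, v] | v. v \<in> V}"
  shows "e \<in> boundaries1 V adj"
proof -
  \<comment> \<open>each loop [v, v] is the boundary of the degenerate triangle [v, v, v]\<close>
  define d where "d = frag_extend (frag_of \<circ> (\<lambda>\<tau>. hd \<tau> # \<tau>)) e"
  have "Poly_Mapping.keys d \<subseteq> (\<Union>\<tau>\<in>Poly_Mapping.keys e. {hd \<tau> # \<tau>})"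
    unfolding d_def using keys_frag_extend[of "frag_of \<circ> (\<lambda>\<tau>. hd \<tau> # \<tau>)" e] by simp
  also have "\<dots> \<subseteq> {\<sigma>. clique_simplex V adj 2 \<sigma>}"
    using assms by (auto simp: clique_simplex_def numeral_2_eq_2)
  finally have "clique_chain V adj 2 d"
    by (simp add: clique_chain_iff_keys)
  moreover have "simplex_boundary d = e"
  proof -
    have "simplex_boundary d = frag_extend (\<lambda>\<tau>. simplex_boundary (frag_of (hd \<tau> # \<tau>))) e"
      unfolding d_def simplex_boundary_def frag_extend_compose by (simp add: o_def)
    also have "\<dots> = frag_extend frag_of e"
      using assms by (intro frag_extend_eq) (auto simp: simplex_boundary_triangle)
    finally show ?thesis by (simp flip: frag_expansion)
  qed
  ultimately show ?thesis unfolding boundaries1_def by blast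
qed

lemma sum_lessThan_Suc_mod:
  assumes "0 < n" shows "(\<Sum>i<n. g (Suc i mod n)) = (\<Sum>i<n. g i)"
proof -
  obtain m where n: "n = Suc m" using assms by (cases n) auto
  have "(\<Sum>i<m. g (Suc i mod Suc m)) = (\<Sum>i<m. g (Suc i))"
    by (rule sum.cong) auto
  then have "(\<Sum>i<Suc m. g (Suc i mod Suc m)) = (\<Sum>i<m. g (Suc i)) + g 0"
    by simp
  also have "\<dots> = (\<Sum>i<Suc m. g i)"
    by (simp only: sum.lessThan_Suc_shift add.commute)
  finally show ?thesis using n by simp
qed

lemma walk_chain_boundary: "xs \<noteq> [] \<Longrightarrow> simplex_boundary (walk_chain xs) = 0"
  using sum_lessThan_Suc_mod[of "length xs" "\<lambda>i. frag_of [xs ! i]"]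
  by (simp add: walk_chain_def simplex_boundary_sum simplex_boundary_edge sum_subtractf)

lemma closed_walk_adj:
  assumes "closed_walk V adj xs" "i < length xs"
  shows "adj (xs ! i) (xs ! (Suc i mod length xs))"
proof (cases "Suc i < length xs")
  case True
  then show ?thesis using assms(1) by (simp add: closed_walk_def is_walk_def)
next
  case False
  with assms(2) have "i = length xs - 1" "xs \<noteq> []"
    by auto
  then have "xs ! i = last xs" "Suc i mod length xs = 0" "xs ! 0 = hd xs"
    by (simp_all add: last_conv_nth hd_conv_nth)
  then show ?thesis using assms(1) by (simp add: closed_walk_def)
qed

lemma walk_chain_in_cycles1:
  assumes "is_graph V adj" "closed_walk V adj xs"
  shows "walk_chain xs \<in> cycles1 V adj"
proof -
  have xs: "xs \<noteq> []" "set xs \<subseteq> V"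
    using assms(2) by (auto simp: closed_walk_def is_walk_def)
  have "clique_simplex V adj 1 [xs ! i, xs ! (Suc i mod length xs)]" if "i < length xs" for i
    using closed_walk_adj[OF assms(2) that] assms(1) by (auto simp: clique_simplex_def is_graph_def)
  then have "clique_chain V adj 1 (walk_chain xs)"
    unfolding walk_chain_def by (intro clique_chain_sum clique_chain_frag_of) simp
  with walk_chain_boundary[OF xs(1)] show ?thesis
    by (simp add: cycles1_def)
qed

definition edge_flux :: "'a \<Rightarrow> 'a \<Rightarrow> ('a list \<Rightarrow>\<^sub>0 int) \<Rightarrow> int" where
  "edge_flux a b c = Poly_Mapping.lookup c [a, b] - Poly_Mapping.lookup c [b, a]"

lemma edge_flux_add: "edge_flux a b (c + d) = edge_flux a b c + edge_flux a b d"
  by (simp add: edge_flux_def lookup_add)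

lemma edge_flux_diff: "edge_flux a b (c - d) = edge_flux a b c - edge_flux a b d"
  by (simp add: edge_flux_def lookup_minus)

lemma edge_flux_cmul: "edge_flux a b (frag_cmul k c) = k * edge_flux a b c"
  by (simp add: edge_flux_def algebra_simps)

lemma edge_flux_frag_of_other:
  "\<tau> \<noteq> [a, b] \<Longrightarrow> \<tau> \<noteq> [b, a] \<Longrightarrow> edge_flux a b (frag_of \<tau>) = 0"
  by (simp add: edge_flux_def eq_commute)

lemma edge_flux_frag_of_edge:
  assumes "a \<noteq> b"
  shows "edge_flux a b (frag_of [a, b]) = 1" "edge_flux a b (frag_of [b, a]) = -1"
  using assms by (simp_all add: edge_flux_def)

lemma edge_flux_frag_of_loop: "edge_flux a b (frag_of [v, v]) = 0"
  by (simp add: edge_flux_def)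

lemma edge_flux_walk_chain:
  assumes "a \<noteq> b" "edge_traversals xs a b = 1"
  shows "edge_flux a b (walk_chain xs) = 1 \<or> edge_flux a b (walk_chain xs) = -1"
proof -
  let ?u = "\<lambda>i. xs ! i" and ?v = "\<lambda>i. xs ! (Suc i mod length xs)"
  define f where "f i = edge_flux a b (frag_of [?u i, ?v i])" for i
  obtain j where j: "{i. i < length xs \<and> {?u i, ?v i} = {a, b}} = {j}"
    using assms(2) unfolding edge_traversals_def by (rule card_1_singletonE)
  have "edge_flux a b (walk_chain xs) = (\<Sum>i<length xs. f i)"
    by (simp add: walk_chain_def f_def edge_flux_def lookup_sum sum_subtractf)
  also have "\<dots> = (\<Sum>i\<in>{j}. f i)"
  proof (rule sum.mono_neutral_right)
    show "{j} \<subseteq> {..<length xs}"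
      using j by blast
    show "\<forall>i\<in>{..<length xs} - {j}. f i = 0"
    proof
      fix i assume "i \<in> {..<length xs} - {j}"
      then have "{?u i, ?v i} \<noteq> {a, b}" using j by blast
      then have "[?u i, ?v i] \<noteq> [a, b]" "[?u i, ?v i] \<noteq> [b, a]" by auto
      then show "f i = 0" unfolding f_def by (rule edge_flux_frag_of_other)
    qed
  qed simp
  also have "\<dots> = f j"
    by simp
  finally have "edge_flux a b (walk_chain xs) = f j" .
  moreover have "{?u j, ?v j} = {a, b}"
    using j by blast
  then have "[?u j, ?v j] = [a, b] \<or> [?u j, ?v j] = [b, a]"
    by (auto simp: doubleton_eq_iff)
  ultimately show ?thesis
    unfolding f_def using edge_flux_frag_of_edge[OF assms(1)] by auto
qed

locale distant_pair =
  fixes V :: "'a set" and adj :: "'a \<Rightarrow> 'a \<Rightarrow> bool" and a b :: 'a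
  assumes graph: "is_graph V adj" and a_in_V: "a \<in> V" and b_in_V: "b \<in> V"
    and distinct: "a \<noteq> b" and not_adj: "\<not> adj a b"
    and no_common_neighbour: "\<not> (adj a c \<and> adj c b)"
begin

abbreviation adjE :: "'a \<Rightarrow> 'a \<Rightarrow> bool" where
  "adjE \<equiv> add_edge adj a b"

lemma clique_simplex_not_both:
  "clique_simplex V adj n \<sigma> \<Longrightarrow> a \<in> set \<sigma> \<Longrightarrow> b \<in> set \<sigma> \<Longrightarrow> False"
  using distinct not_adj unfolding clique_simplex_def by blast

lemma edge_flux_clique_chain:
  assumes "clique_chain V adj n c"
  shows "edge_flux a b c = 0"
proof -
  have "\<not> clique_simplex V adj n [a, b]" "\<not> clique_simplex V adj n [b, a]"
    using clique_simplex_not_both[of n "[a, b]"] clique_simplex_not_both[of n "[b, a]"] by auto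
  then have "[a, b] \<notin> Poly_Mapping.keys c" "[b, a] \<notin> Poly_Mapping.keys c"
    using assms unfolding clique_chain_def by blast+
  then show ?thesis
    by (simp add: edge_flux_def in_keys_iff)
qed

lemma clique_simplex_add_edge_cases:
  assumes "clique_simplex V adjE n \<sigma>"
  shows "clique_simplex V adj n \<sigma> \<or> set \<sigma> \<subseteq> {a, b}"
proof (cases "a \<in> set \<sigma> \<and> b \<in> set \<sigma>")
  case True
  have "x \<in> {a, b}" if x: "x \<in> set \<sigma>" for x
  proof (rule ccontr)
    assume "x \<notin> {a, b}"
    moreover have "a = x \<or> adjE a x" "x = b \<or> adjE x b"
      using assms True x unfolding clique_simplex_def by blast+
    ultimately have "adj a x" "adj x b"
      unfolding add_edge_def by auto
    with no_common_neighbour show False by blast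
  qed
  then show ?thesis by blast
next
  case False
  have "p = q \<or> adj p q" if "p \<in> set \<sigma>" "q \<in> set \<sigma>" for p q
  proof -
    have "p = q \<or> adjE p q"
      using assms that unfolding clique_simplex_def by blast
    with False that show ?thesis
      unfolding add_edge_def by auto
  qed
  with assms show ?thesis
    unfolding clique_simplex_def by blast
qed

lemma edge_flux_simplex_boundary:
  assumes "clique_chain V adjE 2 d"
  shows "edge_flux a b (simplex_boundary d) = 0"
  using assms[unfolded clique_chain_iff_keys]
proof (induction d rule: frag_induction)
  case zero
  then show ?case by (simp add: simplex_boundary_def edge_flux_def)
next
  case (one \<sigma>)
  then have "clique_simplex V adjE 2 \<sigma>" by simp
  then consider "clique_simplex V adj 2 \<sigma>" | "set \<sigma> \<subseteq> {a, b}"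
    using clique_simplex_add_edge_cases by blast
  then show ?case
  proof cases
    case 1
    then have "clique_chain V adj 1 (simplex_boundary (frag_of \<sigma>))"
      by (simp add: clique_chain_simplex_boundary clique_chain_frag_of numeral_2_eq_2)
    then show ?thesis
      by (rule edge_flux_clique_chain)
  next
    case 2
    obtain x y z where \<sigma>: "\<sigma> = [x, y, z]"
      using \<open>clique_simplex V adjE 2 \<sigma>\<close>
      by (auto simp: clique_simplex_def numeral_2_eq_2 length_Suc_conv)
    from 2 have "x = a \<or> x = b" "y = a \<or> y = b" "z = a \<or> z = b"
      by (simp_all add: \<sigma>)
    then show ?thesis
      unfolding \<sigma> simplex_boundary_triangle edge_flux_add edge_flux_diff
      using edge_flux_frag_of_edge[OF distinct] edge_flux_frag_of_loop[of a b a]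
        edge_flux_frag_of_loop[of a b b]
      by (elim disjE) simp_all
  qed
next
  case (diff c d)
  then show ?case by (simp add: simplex_boundary_diff edge_flux_diff)
qed

lemma clique_edge_within_pair:
  assumes "clique_simplex V adj 1 \<tau>" "set \<tau> \<subseteq> {a, b}"
  shows "\<tau> \<in> {[v, v] | v. v \<in> V}"
proof -
  obtain x y where \<tau>: "\<tau> = [x, y]"
    using assms(1) by (auto simp: clique_simplex_def length_Suc_conv)
  have "x = y"
    using assms clique_simplex_not_both[OF assms(1)] by (auto simp: \<tau>)
  then show ?thesis
    using assms(1) by (auto simp: \<tau> clique_simplex_def)
qed

lemma boundaries1_remove_edge:
  assumes "clique_chain V adj 1 z" "z \<in> boundaries1 V adjE"
  shows "z \<in> boundaries1 V adj"
proof -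
  obtain d where d: "clique_chain V adjE 2 d" and z: "z = simplex_boundary d"
    using assms(2) unfolding boundaries1_def by blast
  have "Poly_Mapping.keys d \<subseteq> {\<sigma>. clique_simplex V adj 2 \<sigma>} \<union> {\<sigma>. set \<sigma> \<subseteq> {a, b}}"
    using d clique_simplex_add_edge_cases unfolding clique_chain_iff_keys by blast
  then obtain d1 d2 where d1: "clique_chain V adj 2 d1"
    and d2: "Poly_Mapping.keys d2 \<subseteq> {\<sigma>. set \<sigma> \<subseteq> {a, b}}" and "d1 + d2 = d"
    unfolding clique_chain_iff_keys by (rule frag_split)
  define e where "e = simplex_boundary d2"
  have z_eq: "z = simplex_boundary d1 + e"
    unfolding z e_def by (simp flip: \<open>d1 + d2 = d\<close> add: simplex_boundary_add)
  have "simplex_boundary d1 \<in> boundaries1 V adj"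
    using d1 unfolding boundaries1_def by blast
  moreover have "e \<in> boundaries1 V adj"
  proof (rule loop_chain_in_boundaries1)
    have "e = z - simplex_boundary d1"
      using z_eq by simp
    then have "clique_chain V adj 1 e"
      using assms(1) clique_chain_simplex_boundary[of V adj 1 d1] d1
      by (simp add: clique_chain_diff numeral_2_eq_2)
    moreover have "Poly_Mapping.keys e \<subseteq> {\<tau>. set \<tau> \<subseteq> {a, b}}"
      using d2 keys_simplex_boundary[of d2] set_del_nth unfolding e_def by fastforce
    ultimately show "Poly_Mapping.keys e \<subseteq> {[v, v] | v. v \<in> V}"
      using clique_edge_within_pair unfolding clique_chain_iff_keys by blast
  qed
  ultimately show ?thesis
    using z_eq boundaries1_add by simp
qed

lemma clique_chain_remove_edge:
  assumes "clique_chain V adjE 1 w"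
    and "Poly_Mapping.lookup w [a, b] = 0" "Poly_Mapping.lookup w [b, a] = 0"
  shows "clique_chain V adj 1 w"
  unfolding clique_chain_def
proof
  fix \<tau> assume \<tau>: "\<tau> \<in> Poly_Mapping.keys w"
  then have "clique_simplex V adjE 1 \<tau>"
    using assms(1) by (simp add: clique_chain_def)
  moreover obtain x y where xy: "\<tau> = [x, y]"
    using calculation by (auto simp: clique_simplex_def length_Suc_conv)
  moreover have "\<not> (x = a \<and> y = b)" "\<not> (x = b \<and> y = a)"
    using \<tau> assms(2,3) by (auto simp: xy in_keys_iff)
  ultimately show "clique_simplex V adj 1 \<tau>"
    unfolding clique_simplex_def add_edge_def by auto
qed

lemma boundaries1_add_edge_cycle_plus_walk:
  assumes "edge_traversals xs a b = 1" "clique_chain V adj 1 z"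
    and "z + frag_cmul k (walk_chain xs) \<in> boundaries1 V adjE"
  shows "k = 0 \<and> z \<in> boundaries1 V adj"
proof -
  obtain d where d: "clique_chain V adjE 2 d"
    and dz: "z + frag_cmul k (walk_chain xs) = simplex_boundary d"
    using assms(3) unfolding boundaries1_def by blast
  have "k * edge_flux a b (walk_chain xs) = 0"
    using edge_flux_simplex_boundary[OF d] edge_flux_clique_chain[OF assms(2)]
    by (simp flip: dz add: edge_flux_add edge_flux_cmul)
  then have "k = 0"
    using edge_flux_walk_chain[OF distinct assms(1)] by auto
  with dz d have "z \<in> boundaries1 V adjE"
    unfolding boundaries1_def by auto
  with \<open>k = 0\<close> show ?thesis
    using boundaries1_remove_edge[OF assms(2)] by simp
qed

lemma cycles1_add_edge_decompose:
  assumes "closed_walk V adjE xs" "edge_traversals xs a b = 1" "z \<in> cycles1 V adjE"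
  shows "\<exists>z' \<in> cycles1 V adj. \<exists>k.
           z - (z' + frag_cmul k (walk_chain xs)) \<in> boundaries1 V adjE"
proof -
  let ?C = "walk_chain xs"
  define k where "k = edge_flux a b z * edge_flux a b ?C"
  define y where "y = z - frag_cmul k ?C"
  \<comment> \<open>the boundary [b, a] - [a, a] + [a, b] of [a, b, a] clears [a, b]; as y has no flux,
    this also clears [b, a]\<close>
  define t where "t = frag_cmul (Poly_Mapping.lookup y [a, b]) (frag_of [a, b, a])"
  define w where "w = y - simplex_boundary t"
  have C: "?C \<in> cycles1 V adjE"
    using walk_chain_in_cycles1[OF is_graph_add_edge[OF graph a_in_V b_in_V] assms(1)] .
  have "edge_flux a b ?C * edge_flux a b ?C = 1"
    using edge_flux_walk_chain[OF distinct assms(2)] by auto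
  then have "edge_flux a b y = 0"
    by (simp add: y_def k_def edge_flux_diff edge_flux_cmul mult.assoc)
  then have w_edge: "Poly_Mapping.lookup w [a, b] = 0" "Poly_Mapping.lookup w [b, a] = 0"
    using distinct
    by (simp_all add: w_def t_def simplex_boundary_cmul simplex_boundary_triangle
        lookup_add lookup_minus edge_flux_def)
  have t: "clique_chain V adjE 2 t"
    using a_in_V b_in_V
    by (auto simp: t_def clique_simplex_def add_edge_def intro!: clique_chain_cmul clique_chain_frag_of)
  then have "clique_chain V adjE 1 w"
    using assms(3) C clique_chain_simplex_boundary[of V adjE 1 t]
    by (simp add: w_def y_def cycles1_def numeral_2_eq_2 clique_chain_diff clique_chain_cmul)
  then have "clique_chain V adj 1 w"
    using w_edge by (rule clique_chain_remove_edge)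
  moreover have "simplex_boundary w = 0"
    using assms(3) C
    by (simp add: w_def y_def t_def cycles1_def simplex_boundary_diff simplex_boundary_cmul
        simplex_boundary_triangle simplex_boundary_add simplex_boundary_edge)
  moreover have "z - (w + frag_cmul k ?C) = simplex_boundary t"
    by (simp add: w_def y_def)
  ultimately show ?thesis
    using t unfolding cycles1_def boundaries1_def by blast
qed

end

theorem lemma7p4:
  fixes V :: "'a set" and adj :: "'a \<Rightarrow> 'a \<Rightarrow> bool" and a b :: 'a
  assumes "reflexive_graph V adj"
    and "graph_connected V adj"
    and "a \<in> V" and "b \<in> V"
    and "graph_dist V adj a b \<ge> 4"
  shows "(\<forall>z \<in> cycles1 V adj. z \<in> boundaries1 V (add_edge adj a b) \<longrightarrow> z \<in> boundaries1 V adj)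
    \<and> (\<forall>xs. closed_walk V (add_edge adj a b) xs \<and> edge_traversals xs a b = 1 \<longrightarrow>
          (\<forall>z \<in> cycles1 V (add_edge adj a b). \<exists>z' \<in> cycles1 V adj. \<exists>k::int.
              z - (z' + frag_cmul k (walk_chain xs)) \<in> boundaries1 V (add_edge adj a b))
        \<and> (\<forall>z' \<in> cycles1 V adj. \<forall>k::int.
              z' + frag_cmul k (walk_chain xs) \<in> boundaries1 V (add_edge adj a b)
                \<longrightarrow> k = 0 \<and> z' \<in> boundaries1 V adj))"
proof -
  have graph: "is_graph V adj"
    using assms(1) by (simp add: reflexive_graph_def)
  interpret distant_pair V adj a b
    using graph assms(3,4) graph_dist_ge_3D[OF graph assms(3,4)] assms(5) by unfold_locales auto
  have "clique_chain V adj 1 z" if "z \<in> cycles1 V adj" for z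
    using that by (simp add: cycles1_def)
  then show ?thesis
    using boundaries1_remove_edge cycles1_add_edge_decompose boundaries1_add_edge_cycle_plus_walk
    by blast
qed

end
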